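(* Fix integers $\tilde\ell\ge1$ and $\tilde m_1,\dots,\tilde m_{\tilde\ell}\ge1$ with $\sum_a\tilde m_a<d$, and let $\theta^*\in\Omega_b$. Suppose each of $n$ users is independently offered all $d$ items, draws a PL ranking with parameter $\theta^*$, and reveals the ordered partition consisting of the set of her top $\tilde m_1$ items, the set of the next $\tilde m_2$ items, ..., and the set of the remaining items. Then for every $M\ge\min_{a\in[\tilde\ell]}\tilde m_a$, the order-$M$ rank-breaking estimator $\widehat\theta\in\arg\max_{\theta\in\Omega_b}\mathcal{L}_{\rm RB}(\theta)$ is consistent, i.e. $\widehat\theta\to\theta^*$ as $n\to\infty$.
   Context: PL model: items $[d]$, parameter $\theta\in\mathbb{R}^d$; when a set $S$ is offered, a ranking $\sigma:[|S|]\to S$ (position 1 most preferred) is drawn with probability $\prod_{i=1}^{|S|-1}e^{\theta_{\sigma(i)}}/\sum_{i'=i}^{|S|}e^{\theta_{\sigma(i')}}$. $\Omega_b=\{\theta\in\mathbb{R}^d:\sum_i\theta_i=0,|\theta_i|\le b\}$. For disjoint nonempty $T,B$, $\mathbb{P}_\theta(B\prec T)=\sum_{\sigma}\prod_{u=1}^{|T|}\frac{e^{\theta_{\sigma(u)}}}{\sum_{c=u}^{|T|}e^{\theta_{\sigma(c)}}+\sum_{i\in B}e^{\theta_i}}$ (sum over orderings $\sigma$ of $T$). From each revealed ordered partition, one rank-breaking edge is formed for each of the first $\tilde\ell$ subsets: its top-set $T$ is that subset and its bottom-set $B$ is the union of all subsets below it. The order-$M$ log-likelihood $\mathcal{L}_{\rm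 RB}(\theta)$ is the sum over all users and all their edges with $|T|\le M$ of $\log\mathbb{P}_\theta(B\prec T)$. *)

theory Defs
  imports Complex_Main "HOL-Combinatorics.Multiset_Permutations"
begin

(* Items are the elements of a finite type 'a, so d = CARD('a).
   A ranking is a list (position 1 = head) enumerating the offered set. *)

definition PL_prob :: "('a \<Rightarrow> real) \<Rightarrow> 'a list \<Rightarrow> real" where
  "PL_prob \<theta> \<sigma> =
     (\<Prod>i<length \<sigma> - 1. exp (\<theta> (\<sigma> ! i)) /
        (\<Sum>i'\<in>{i..<length \<sigma>}. exp (\<theta> (\<sigma> ! i'))))"

definition Omega :: "real \<Rightarrow> ('a::finite \<Rightarrow> real) set" where
  "Omega b = {\<theta>. (\<Sum>i\<in>UNIV. \<theta> i) = 0 \<and> (\<forall>i. \<bar>\<theta> i\<bar> \<le> b)}"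

definition P_BT :: "('a \<Rightarrow> real) \<Rightarrow> 'a set \<Rightarrow> 'a set \<Rightarrow> real" where
  "P_BT \<theta> T B =
     (\<Sum>\<tau>\<in>permutations_of_set T.
        \<Prod>u<length \<tau>. exp (\<theta> (\<tau> ! u)) /
          ((\<Sum>c\<in>{u..<length \<tau>}. exp (\<theta> (\<tau> ! c))) + (\<Sum>i\<in>B. exp (\<theta> i))))"

(* Revealed ordered partition with block sizes ms = [m_1,...,m_l] (0-indexed a < l):
   block a is the set of items at positions m_1+..+m_a+1 .. m_1+..+m_{a+1};
   the final block is the set of remaining items. *)
definition top_set :: "nat list \<Rightarrow> 'a list \<Rightarrow> nat \<Rightarrow> 'a set" where
  "top_set ms \<sigma> a = set (take (ms ! a) (drop (sum_list (take a ms)) \<sigma>))"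

definition bottom_set :: "nat list \<Rightarrow> 'a list \<Rightarrow> nat \<Rightarrow> 'a set" where
  "bottom_set ms \<sigma> a = set (drop (sum_list (take (Suc a) ms)) \<sigma>)"

(* Order-M rank-breaking log-likelihood of the data (one full ranking per user;
   it depends on each ranking only through the revealed ordered partition). *)
definition L_RB :: "nat list \<Rightarrow> nat \<Rightarrow> 'a list list \<Rightarrow> ('a \<Rightarrow> real) \<Rightarrow> real" where
  "L_RB ms M data \<theta> =
     (\<Sum>j<length data. \<Sum>a\<in>{a. a < length ms \<and> card (top_set ms (data ! j) a) \<le> M}.
        ln (P_BT \<theta> (top_set ms (data ! j) a) (bottom_set ms (data ! j) a)))"

definition RB_argmax :: "real \<Rightarrow> nat list \<Rightarrow> nat \<Rightarrow> 'a::finite list list \<Rightarrow> ('a \<Rightarrow> real) set" where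
  "RB_argmax b ms M data =
     {\<theta> \<in> Omega b. \<forall>\<theta>'\<in>Omega b. L_RB ms M data \<theta>' \<le> L_RB ms M data \<theta>}"

definition samples :: "nat \<Rightarrow> 'a::finite list list set" where
  "samples n = {data. length data = n \<and> set data \<subseteq> permutations_of_set (UNIV :: 'a set)}"

definition prob_n :: "('a::finite \<Rightarrow> real) \<Rightarrow> nat \<Rightarrow> ('a list list \<Rightarrow> bool) \<Rightarrow> real" where
  "prob_n \<theta> n E = (\<Sum>data\<in>{data \<in> samples n. E data}. \<Prod>j<n. PL_prob \<theta> (data ! j))"

end

(* The normalised rank-breaking log-likelihood L_RB(theta)/n is a fixed finite combination of
   the empirical frequencies of the d! rankings, so by Chebyshev's inequality it is uniformly close
   on the compact set Omega_b to its expectation.  The expectation is maximised at theta*, since the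
   likelihood ratio of every revealed block has expectation one (Gibbs' inequality), and strictly so:
   a block of minimal size is used because M >= min m_a, and a ranking that puts the items where
   theta - theta* is largest into this block and those where it is smallest below it gives the
   block different probabilities, by monotonicity of the Plackett-Luce top-set probability in the
   weights.  Compactness turns this into a uniform gap, which no maximiser can cross once all
   frequencies are close to their probabilities. *)

theory Submission
  imports Defs "HOL-Analysis.Analysis"
begin

section \<open>Plackett--Luce probabilities in weight form\<close>

fun pl_ranking :: "('a \<Rightarrow> real) \<Rightarrow> 'a list \<Rightarrow> real" where
  "pl_ranking w [] = 1"
| "pl_ranking w (t # ts) =
     (if ts = [] then 1 else w t / (w t + sum_list (map w ts)) * pl_ranking w ts)"

text \<open>\<open>pl_prefix w y \<tau>\<close> is the probability that the items of \<open>\<tau>\<close> are drawn first, in this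
  order, when the items not in \<open>\<tau>\<close> have total weight \<open>y\<close>; summing over the orderings of \<open>T\<close>
  gives the probability \<open>pl_top_set w T y\<close> that \<open>T\<close> is the set of the top \<open>|T|\<close> items.\<close>

fun pl_prefix :: "('a \<Rightarrow> real) \<Rightarrow> real \<Rightarrow> 'a list \<Rightarrow> real" where
  "pl_prefix w y [] = 1"
| "pl_prefix w y (t # ts) = w t / (w t + sum_list (map w ts) + y) * pl_prefix w y ts"

definition pl_top_set :: "('a \<Rightarrow> real) \<Rightarrow> 'a set \<Rightarrow> real \<Rightarrow> real" where
  "pl_top_set w T y = (\<Sum>\<tau>\<in>permutations_of_set T. pl_prefix w y \<tau>)"

lemma sum_atLeastLessThan_nth_eq_sum_list_drop:
  "(\<Sum>c\<in>{u..<length xs}. f (xs ! c)) = sum_list (map f (drop u xs))"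
proof -
  have "drop u xs = map ((!) xs) [u..<length xs]"
    by (rule nth_equalityI) auto
  then show ?thesis
    by (simp add: interv_sum_list_conv_sum_set_nat o_def)
qed

lemma prod_eq_pl_prefix:
  "(\<Prod>u<length \<tau>. w (\<tau> ! u) / ((\<Sum>c\<in>{u..<length \<tau>}. w (\<tau> ! c)) + y)) = pl_prefix w y \<tau>"
  unfolding sum_atLeastLessThan_nth_eq_sum_list_drop
  by (induction \<tau>) (simp_all add: prod.lessThan_Suc_shift del: prod.lessThan_Suc)

lemma prod_eq_pl_ranking:
  "(\<Prod>i<length \<sigma> - 1. w (\<sigma> ! i) / (\<Sum>i'\<in>{i..<length \<sigma>}. w (\<sigma> ! i'))) = pl_ranking w \<sigma>"
  unfolding sum_atLeastLessThan_nth_eq_sum_list_drop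
proof (induction \<sigma>)
  case (Cons t ts)
  then show ?case
    by (cases ts) (simp_all add: prod.lessThan_Suc_shift del: prod.lessThan_Suc)
qed simp

lemma P_BT_eq_pl_top_set: "P_BT \<theta> T B = pl_top_set (\<lambda>i. exp (\<theta> i)) T (\<Sum>i\<in>B. exp (\<theta> i))"
  by (simp add: P_BT_def pl_top_set_def prod_eq_pl_prefix[where w = "\<lambda>i. exp (\<theta> i)", simplified])

lemma PL_prob_eq_pl_ranking: "PL_prob \<theta> \<sigma> = pl_ranking (\<lambda>i. exp (\<theta> i)) \<sigma>"
  by (simp add: PL_prob_def prod_eq_pl_ranking[where w = "\<lambda>i. exp (\<theta> i)", simplified])

lemma sum_permutations_of_set_Cons:
  assumes "finite A" "A \<noteq> {}"
  shows "(\<Sum>xs\<in>permutations_of_set A. F xs) = (\<Sum>a\<in>A. \<Sum>xs\<in>permutations_of_set (A - {a}). F (a # xs))"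
proof -
  have "(\<Sum>xs\<in>permutations_of_set A. F xs)
      = (\<Sum>a\<in>A. \<Sum>xs\<in>(#) a ` permutations_of_set (A - {a}). F xs)"
    unfolding permutations_of_set_nonempty[OF assms(2)]
    by (rule sum.UNION_disjoint) (use assms in auto)
  also have "\<dots> = (\<Sum>a\<in>A. \<Sum>xs\<in>permutations_of_set (A - {a}). F (a # xs))"
    by (rule sum.cong[OF refl], subst sum.reindex) (auto simp: inj_on_def)
  finally show ?thesis .
qed

lemma sum_list_map_permutation: "xs \<in> permutations_of_set A \<Longrightarrow> sum_list (map w xs) = sum w A"
  by (metis permutations_of_setD sum_list_distinct_conv_sum_set)

lemma sum_list_map_permutation_insert:
  assumes "finite S" "s \<in> S" "xs \<in> permutations_of_set (S - {s})"
  shows "w s + sum_list (map w xs) = sum w S"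
  using assms by (simp add: sum_list_map_permutation sum.remove)

lemma pl_prefix_pos: "(\<And>x. w x > 0) \<Longrightarrow> y \<ge> 0 \<Longrightarrow> pl_prefix w y \<tau> > 0"
proof (induction \<tau>)
  case (Cons t ts)
  have "sum_list (map w ts) \<ge> 0"
    using Cons.prems(1) by (intro sum_list_nonneg) (auto intro: less_imp_le)
  with Cons show ?case
    by (simp add: add_pos_nonneg)
qed simp

lemma pl_ranking_pos: "(\<And>x. w x > 0) \<Longrightarrow> pl_ranking w \<sigma> > 0"
proof (induction \<sigma>)
  case (Cons t ts)
  have "sum_list (map w ts) \<ge> 0"
    using Cons.prems by (intro sum_list_nonneg) (auto intro: less_imp_le)
  with Cons show ?case
    by (auto intro!: mult_pos_pos divide_pos_pos add_pos_nonneg)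
qed simp

lemma pl_top_set_pos: "finite T \<Longrightarrow> (\<And>x. w x > 0) \<Longrightarrow> y \<ge> 0 \<Longrightarrow> pl_top_set w T y > 0"
  unfolding pl_top_set_def by (rule sum_pos) (auto intro: pl_prefix_pos)

lemma pl_top_set_empty [simp]: "pl_top_set w {} y = 1"
  by (simp add: pl_top_set_def)

lemma pl_ranking_Cons_permutation:
  assumes "finite S" "s \<in> S" "xs \<in> permutations_of_set (S - {s})" "w s > 0"
  shows "pl_ranking w (s # xs) = w s / sum w S * pl_ranking w xs"
proof -
  have "w s + sum_list (map w xs) = sum w S"
    by (rule sum_list_map_permutation_insert[OF assms(1-3)])
  then show ?thesis
    using assms(4) by (cases "xs = []") auto
qed

lemma sum_pl_ranking_first_choice:
  assumes "finite S" "S \<noteq> {}" "\<And>x. w x > 0"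
  shows "(\<Sum>xs\<in>permutations_of_set S. pl_ranking w xs * G xs)
       = (\<Sum>s\<in>S. w s / sum w S * (\<Sum>xs\<in>permutations_of_set (S - {s}). pl_ranking w xs * G (s # xs)))"
  unfolding sum_permutations_of_set_Cons[OF assms(1,2)] sum_distrib_left
  by (intro sum.cong refl) (simp add: pl_ranking_Cons_permutation[OF assms(1)] assms(3) del: pl_ranking.simps)

lemma sum_pl_ranking_eq_1:
  assumes "finite S" "\<And>x. w x > 0"
  shows "(\<Sum>xs\<in>permutations_of_set S. pl_ranking w xs) = 1"
  using assms(1)
proof (induction S rule: finite_remove_induct)
  case (remove S)
  have "sum w S > 0"
    using remove assms(2) by (simp add: sum_pos)
  then show ?case
    using sum_pl_ranking_first_choice[OF remove(1,2) assms(2), where G = "\<lambda>_. 1"] remove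
    by (simp add: sum_divide_distrib[symmetric])
qed simp

lemma pl_top_set_first_choice:
  assumes "finite T" "T \<noteq> {}"
  shows "pl_top_set w T y = (\<Sum>t\<in>T. w t / (sum w T + y) * pl_top_set w (T - {t}) y)"
proof -
  have "pl_prefix w y (t # xs) = w t / (sum w T + y) * pl_prefix w y xs"
    if "t \<in> T" "xs \<in> permutations_of_set (T - {t})" for t xs
    using sum_list_map_permutation_insert[OF assms(1) that, of w] by simp
  then show ?thesis
    unfolding pl_top_set_def sum_permutations_of_set_Cons[OF assms] sum_distrib_left
    by (intro sum.cong refl) simp
qed

lemma pl_top_set_first_choice_mult:
  assumes "finite T" "T \<noteq> {}" "sum w T + y > 0"
  shows "(sum w T + y) * pl_top_set w T y = (\<Sum>t\<in>T. w t * pl_top_set w (T - {t}) y)"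
  using assms by (simp add: pl_top_set_first_choice sum_distrib_left)

section \<open>Law of a revealed block\<close>

lemma subsets_card_Suc_containing:
  assumes "finite S" "s \<in> S"
  shows "{T. T \<subseteq> S \<and> card T = Suc k \<and> s \<in> T} = insert s ` {U. U \<subseteq> S - {s} \<and> card U = k}"
proof (intro equalityI subsetI)
  fix T assume T: "T \<in> {T. T \<subseteq> S \<and> card T = Suc k \<and> s \<in> T}"
  then have "finite T"
    using assms(1) finite_subset by blast
  with T have "T = insert s (T - {s})" "T - {s} \<subseteq> S - {s}" "card (T - {s}) = k"
    by auto
  then show "T \<in> insert s ` {U. U \<subseteq> S - {s} \<and> card U = k}"
    by blast
next
  fix T assume "T \<in> insert s ` {U. U \<subseteq> S - {s} \<and> card U = k}"
  then obtain U where U: "T = insert s U" "U \<subseteq> S - {s}" "card U = k"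
    by blast
  moreover have "finite U" "s \<notin> U"
    using U(2) assms(1) finite_subset by blast+
  ultimately show "T \<in> {T. T \<subseteq> S \<and> card T = Suc k \<and> s \<in> T}"
    using assms(2) by auto
qed

lemma sum_card_Suc_subsets_containing:
  assumes "finite S" "s \<in> S"
  shows "(\<Sum>T | T \<subseteq> S \<and> card T = Suc k \<and> s \<in> T. f T)
       = (\<Sum>U | U \<subseteq> S - {s} \<and> card U = k. f (insert s U))"
proof -
  have "inj_on (insert s) {U. U \<subseteq> S - {s} \<and> card U = k}"
    unfolding inj_on_def by blast
  then show ?thesis
    by (simp add: subsets_card_Suc_containing[OF assms] sum.reindex)
qed

lemma sum_pl_ranking_top_set:
  assumes "finite S" "k \<le> card S" "\<And>x. w x > 0"
  shows "(\<Sum>xs\<in>permutations_of_set S. pl_ranking w xs * g (set (take k xs)) (set (drop k xs)))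
       = (\<Sum>T | T \<subseteq> S \<and> card T = k. pl_top_set w T (sum w (S - T)) * g T (S - T))"
  using assms(1,2)
proof (induction k arbitrary: S g)
  case 0
  have "{T. T \<subseteq> S \<and> card T = 0} = {{}}"
    using 0(1) by (auto simp: card_eq_0_iff dest: finite_subset)
  moreover have "set xs = S" if "xs \<in> permutations_of_set S" for xs
    using that by (auto dest: permutations_of_setD)
  ultimately show ?case
    using sum_pl_ranking_eq_1[OF 0(1) assms(3)] by (simp add: sum_distrib_right[symmetric])
next
  case (Suc k)
  define W where "W = sum w S"
  define F where "F = {T. T \<subseteq> S \<and> card T = Suc k}"
  define H where "H = (\<lambda>s T. w s / W * (pl_top_set w (T - {s}) (sum w (S - T)) * g T (S - T)))"
  have "S \<noteq> {}"
    using Suc.prems by auto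
  have inner: "(\<Sum>xs\<in>permutations_of_set (S - {s}). pl_ranking w xs * g (insert s (set (take k xs))) (set (drop k xs)))
      = (\<Sum>T\<in>{T \<in> F. s \<in> T}. pl_top_set w (T - {s}) (sum w (S - T)) * g T (S - T))"
    if s: "s \<in> S" for s
  proof -
    have eqs: "insert s U - {s} = U" "S - insert s U = S - {s} - U" if "U \<subseteq> S - {s}" for U
      using that by auto
    have "(\<Sum>xs\<in>permutations_of_set (S - {s}). pl_ranking w xs * g (insert s (set (take k xs))) (set (drop k xs)))
        = (\<Sum>U | U \<subseteq> S - {s} \<and> card U = k. pl_top_set w U (sum w (S - {s} - U)) * g (insert s U) (S - {s} - U))"
      by (rule Suc.IH) (use Suc.prems s in auto)
    also have "\<dots> = (\<Sum>T | T \<subseteq> S \<and> card T = Suc k \<and> s \<in> T. pl_top_set w (T - {s}) (sum w (S - T)) * g T (S - T))"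
      unfolding sum_card_Suc_subsets_containing[OF Suc.prems(1) s]
      by (intro sum.cong refl) (simp only: mem_Collect_eq eqs)
    finally show ?thesis
      unfolding F_def by (simp add: conj_assoc)
  qed
  have "(\<Sum>xs\<in>permutations_of_set S. pl_ranking w xs * g (set (take (Suc k) xs)) (set (drop (Suc k) xs)))
      = (\<Sum>s\<in>S. \<Sum>T\<in>{T \<in> F. s \<in> T}. H s T)"
    by (simp add: sum_pl_ranking_first_choice[OF Suc.prems(1) \<open>S \<noteq> {}\<close> assms(3)] inner
        H_def W_def sum_distrib_left)
  also have "\<dots> = (\<Sum>T\<in>F. \<Sum>s | s \<in> S \<and> s \<in> T. H s T)"
    by (rule sum.swap_restrict) (use Suc.prems(1) in \<open>auto simp: F_def\<close>)
  also have "\<dots> = (\<Sum>T\<in>F. pl_top_set w T (sum w (S - T)) * g T (S - T))"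
  proof (rule sum.cong[OF refl])
    fix T assume "T \<in> F"
    then have T: "T \<subseteq> S" "finite T" "T \<noteq> {}"
      unfolding F_def using Suc.prems(1) finite_subset by auto
    then have "{s. s \<in> S \<and> s \<in> T} = T" "sum w T + sum w (S - T) = W"
      unfolding W_def using sum.subset_diff[OF T(1) Suc.prems(1), of w] by auto
    then show "(\<Sum>s | s \<in> S \<and> s \<in> T. H s T) = pl_top_set w T (sum w (S - T)) * g T (S - T)"
      unfolding H_def pl_top_set_first_choice[OF T(2,3), of w "sum w (S - T)"]
      by (simp add: sum_distrib_right mult.assoc)
  qed
  finally show ?case
    unfolding F_def .
qed

text \<open>Conditioning on the first \<open>q\<close> choices reduces the claim to \<open>q = 0\<close>.\<close>

lemma sum_pl_ranking_block_ratio: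
  assumes "finite S" "q + k < card S" "\<And>x. w x > 0" "\<And>x. v x > 0"
  shows "(\<Sum>xs\<in>permutations_of_set S. pl_ranking v xs *
           (pl_top_set w (set (take k (drop q xs))) (sum w (set (drop (q + k) xs)))
            / pl_top_set v (set (take k (drop q xs))) (sum v (set (drop (q + k) xs))))) = 1"
  using assms(1,2)
proof (induction q arbitrary: S)
  case 0
  have pos: "pl_top_set v T (sum v (S - T)) > 0" if "T \<subseteq> S" for T
    using 0(1) that assms(4) finite_subset by (intro pl_top_set_pos) (auto intro: sum_nonneg less_imp_le)
  have "(\<Sum>xs\<in>permutations_of_set S. pl_ranking v xs *
           (pl_top_set w (set (take k (drop 0 xs))) (sum w (set (drop (0 + k) xs)))
            / pl_top_set v (set (take k (drop 0 xs))) (sum v (set (drop (0 + k) xs)))))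
      = (\<Sum>T | T \<subseteq> S \<and> card T = k. pl_top_set v T (sum v (S - T)) *
           (pl_top_set w T (sum w (S - T)) / pl_top_set v T (sum v (S - T))))"
    using sum_pl_ranking_top_set[of S k v "\<lambda>T B. pl_top_set w T (sum w B) / pl_top_set v T (sum v B)"]
      0 assms(4) by simp
  also have "\<dots> = (\<Sum>T | T \<subseteq> S \<and> card T = k. pl_top_set w T (sum w (S - T)))"
    using pos by (intro sum.cong) (auto simp: less_imp_neq[THEN not_sym])
  also have "\<dots> = (\<Sum>xs\<in>permutations_of_set S. pl_ranking w xs)"
    using sum_pl_ranking_top_set[of S k w "\<lambda>T B. 1"] 0 assms(3) by simp
  also have "\<dots> = 1"
    by (rule sum_pl_ranking_eq_1[OF 0(1) assms(3)])
  finally show ?case .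
next
  case (Suc q)
  have S: "S \<noteq> {}" "sum v S > 0"
    using Suc.prems assms(4) by (auto intro: sum_pos)
  have "(\<Sum>xs\<in>permutations_of_set S. pl_ranking v xs *
           (pl_top_set w (set (take k (drop (Suc q) xs))) (sum w (set (drop (Suc q + k) xs)))
            / pl_top_set v (set (take k (drop (Suc q) xs))) (sum v (set (drop (Suc q + k) xs)))))
     = (\<Sum>s\<in>S. v s / sum v S * (\<Sum>xs\<in>permutations_of_set (S - {s}). pl_ranking v xs *
           (pl_top_set w (set (take k (drop q xs))) (sum w (set (drop (q + k) xs)))
            / pl_top_set v (set (take k (drop q xs))) (sum v (set (drop (q + k) xs))))))"
    by (subst sum_pl_ranking_first_choice[OF Suc.prems(1) S(1) assms(4)]) simp
  also have "\<dots> = (\<Sum>s\<in>S. v s / sum v S * 1)"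
  proof (intro sum.cong refl arg_cong2[where f = "(*)"])
    fix s assume "s \<in> S"
    then show "(\<Sum>xs\<in>permutations_of_set (S - {s}). pl_ranking v xs *
           (pl_top_set w (set (take k (drop q xs))) (sum w (set (drop (q + k) xs)))
            / pl_top_set v (set (take k (drop q xs))) (sum v (set (drop (q + k) xs))))) = 1"
      using Suc.prems by (intro Suc.IH) auto
  qed
  also have "\<dots> = 1"
    using S by (simp add: sum_divide_distrib[symmetric])
  finally show ?case .
qed

section \<open>Monotonicity of the top-set probability\<close>

lemma pl_top_set_strict_antimono_rest:
  assumes "finite T" "T \<noteq> {}" "\<And>x. w x > 0" "0 \<le> y" "y < y'"
  shows "pl_top_set w T y' < pl_top_set w T y"
  using assms(1,2)
proof (induction T rule: finite_remove_induct)
  case (remove T)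
  have "sum w T > 0"
    using remove(1,2) assms(3) by (simp add: sum_pos)
  have "w t / (sum w T + y') * pl_top_set w (T - {t}) y' < w t / (sum w T + y) * pl_top_set w (T - {t}) y"
    if "t \<in> T" for t
  proof (rule mult_less_le_imp_less)
    show "w t / (sum w T + y') < w t / (sum w T + y)"
      using assms(3)[of t] assms(4,5) \<open>sum w T > 0\<close> by (intro divide_strict_left_mono) auto
    show "pl_top_set w (T - {t}) y' \<le> pl_top_set w (T - {t}) y"
    proof (cases "T - {t} = {}")
      case True
      then show ?thesis
        by (simp only: pl_top_set_empty order_refl)
    qed (use remove.IH[OF that] in simp)
    show "0 \<le> w t / (sum w T + y')"
      using assms(3)[of t] assms(4,5) \<open>sum w T > 0\<close> by simp
    show "0 < pl_top_set w (T - {t}) y'"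
      using remove(1) assms by (intro pl_top_set_pos) auto
  qed
  then show ?case
    unfolding pl_top_set_first_choice[OF remove(1,2)] by (intro sum_strict_mono remove)
qed simp

lemma pl_top_set_antimono_rest:
  assumes "finite T" "\<And>x. w x > 0" "0 \<le> y" "y \<le> y'"
  shows "pl_top_set w T y' \<le> pl_top_set w T y"
  using pl_top_set_strict_antimono_rest[OF assms(1) _ assms(2,3), of y'] assms
  by (cases "T = {} \<or> y = y'") (auto intro: less_imp_le)

lemma pl_top_set_less_remove:
  assumes "finite T" "\<And>x. w x > 0" "y > 0" "t \<in> T"
  shows "pl_top_set w T y < pl_top_set w (T - {t}) y"
  using assms(1,4)
proof (induction T arbitrary: t rule: finite_remove_induct)
  case (remove T)
  define T' where "T' = T - {t}"
  have nonneg: "sum w A \<ge> 0" for A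
    using assms(2) by (simp add: sum_nonneg less_imp_le)
  have "finite T'" "T = insert t T'" "t \<notin> T'"
    using remove unfolding T'_def by auto
  show ?case
  proof (cases "T' = {}")
    case True
    then show ?thesis
      using pl_top_set_first_choice[of "{t}" w y] assms(2)[of t] assms(3) \<open>T = insert t T'\<close>
      by (simp add: T'_def[symmetric])
  next
    case False
    have pos: "sum w T + y > 0"
      using nonneg[of T] assms(3) by simp
    have "(\<Sum>s\<in>T'. w s * pl_top_set w (T - {s}) y) < (\<Sum>s\<in>T'. w s * pl_top_set w (T' - {s}) y)"
    proof (rule sum_strict_mono[OF \<open>finite T'\<close> False])
      fix s assume "s \<in> T'"
      then have "pl_top_set w (T - {s}) y < pl_top_set w (T - {s} - {t}) y"
        using remove.IH \<open>T = insert t T'\<close> \<open>t \<notin> T'\<close> by blast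
      moreover have "T - {s} - {t} = T' - {s}"
        unfolding T'_def by auto
      ultimately show "w s * pl_top_set w (T - {s}) y < w s * pl_top_set w (T' - {s}) y"
        using assms(2)[of s] by simp
    qed
    then have "(sum w T + y) * pl_top_set w T y < w t * pl_top_set w T' y + (sum w T' + y) * pl_top_set w T' y"
      using pl_top_set_first_choice_mult[OF remove(1,2) pos]
        pl_top_set_first_choice_mult[OF \<open>finite T'\<close> False, of w y] nonneg[of T'] assms(3)
        sum.remove[OF remove(1) remove.prems, of "\<lambda>s. w s * pl_top_set w (T - {s}) y"]
      by (simp add: T'_def)
    also have "\<dots> = (sum w T + y) * pl_top_set w T' y"
      using \<open>finite T'\<close> \<open>T = insert t T'\<close> \<open>t \<notin> T'\<close> by (simp add: algebra_simps)
    finally show ?thesis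
      using pos unfolding T'_def by simp
  qed
qed simp

text \<open>If \<open>w \<le> w'\<close> on \<open>T\<close>, every summand is nonnegative by induction and by
  \<open>pl_top_set_less_remove\<close>.\<close>

lemma pl_top_set_weights_diff:
  assumes "finite T" "T \<noteq> {}" "sum w T + y > 0" "sum w' T + y > 0"
  shows "(sum w' T + y) * (pl_top_set w' T y - pl_top_set w T y)
       = (\<Sum>t\<in>T. w' t * (pl_top_set w' (T - {t}) y - pl_top_set w (T - {t}) y)
                 + (w' t - w t) * (pl_top_set w (T - {t}) y - pl_top_set w T y))"
proof -
  let ?P = "pl_top_set w" and ?P' = "pl_top_set w'"
  have "(\<Sum>t\<in>T. w' t * (?P' (T - {t}) y - ?P (T - {t}) y) + (w' t - w t) * (?P (T - {t}) y - ?P T y))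
      = (\<Sum>t\<in>T. w' t * ?P' (T - {t}) y - w t * ?P (T - {t}) y - (w' t - w t) * ?P T y)"
    by (intro sum.cong refl) (simp add: algebra_simps)
  also have "\<dots> = (\<Sum>t\<in>T. w' t * ?P' (T - {t}) y) - (\<Sum>t\<in>T. w t * ?P (T - {t}) y)
                  - (sum w' T - sum w T) * ?P T y"
    by (simp add: sum_subtractf flip: sum_distrib_right)
  also have "\<dots> = (sum w' T + y) * (?P' T y - ?P T y)"
    by (simp add: algebra_simps flip: pl_top_set_first_choice_mult[OF assms(1,2,3)]
        pl_top_set_first_choice_mult[OF assms(1,2,4)])
  finally show ?thesis ..
qed

lemma pl_top_set_mono_weights:
  assumes "finite T" "\<And>x. w x > 0" "\<And>x. w' x > 0" "y > 0" "\<forall>t\<in>T. w t \<le> w' t"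
  shows "pl_top_set w T y \<le> pl_top_set w' T y"
  using assms(1,5)
proof (induction T rule: finite_remove_induct)
  case (remove T)
  have "0 \<le> sum w T" "0 \<le> sum w' T"
    using assms(2,3) by (simp_all add: sum_nonneg less_imp_le)
  then have pos: "sum w T + y > 0" "sum w' T + y > 0"
    using assms(4) by simp_all
  have "0 \<le> (sum w' T + y) * (pl_top_set w' T y - pl_top_set w T y)"
    unfolding pl_top_set_weights_diff[OF remove(1,2) pos]
  proof (intro sum_nonneg add_nonneg_nonneg mult_nonneg_nonneg)
    fix t assume "t \<in> T"
    then show "0 \<le> w' t" "0 \<le> pl_top_set w' (T - {t}) y - pl_top_set w (T - {t}) y"
      "0 \<le> w' t - w t" "0 \<le> pl_top_set w (T - {t}) y - pl_top_set w T y"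
      using assms(3)[of t] remove.IH remove.prems pl_top_set_less_remove[OF remove(1) assms(2,4)]
      by (auto intro: less_imp_le)
  qed
  then show ?case
    using pos(2) by (simp add: zero_le_mult_iff)
qed simp

lemma pl_top_set_strict_mono_weights:
  assumes "finite T" "\<And>x. w x > 0" "\<And>x. w' x > 0" "y > 0" "\<forall>t\<in>T. w t \<le> w' t"
    and "t\<^sub>0 \<in> T" "w t\<^sub>0 < w' t\<^sub>0"
  shows "pl_top_set w T y < pl_top_set w' T y"
proof -
  have "0 \<le> sum w T" "0 \<le> sum w' T"
    using assms(2,3) by (simp_all add: sum_nonneg less_imp_le)
  then have pos: "sum w T + y > 0" "sum w' T + y > 0"
    using assms(4) by simp_all
  have terms: "0 \<le> w' t * (pl_top_set w' (T - {t}) y - pl_top_set w (T - {t}) y)"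
    "0 \<le> (w' t - w t) * (pl_top_set w (T - {t}) y - pl_top_set w T y)"
    "w t < w' t \<Longrightarrow> 0 < (w' t - w t) * (pl_top_set w (T - {t}) y - pl_top_set w T y)"
    if "t \<in> T" for t
  proof -
    have "pl_top_set w (T - {t}) y \<le> pl_top_set w' (T - {t}) y"
      using assms(1-5) by (intro pl_top_set_mono_weights) auto
    moreover have "pl_top_set w T y < pl_top_set w (T - {t}) y"
      using pl_top_set_less_remove[of T w y t] assms(1,2,4) that by blast
    ultimately show "0 \<le> w' t * (pl_top_set w' (T - {t}) y - pl_top_set w (T - {t}) y)"
      "0 \<le> (w' t - w t) * (pl_top_set w (T - {t}) y - pl_top_set w T y)"
      "w t < w' t \<Longrightarrow> 0 < (w' t - w t) * (pl_top_set w (T - {t}) y - pl_top_set w T y)"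
      using that assms(3,5) by (simp_all add: less_imp_le mult_nonneg_nonneg mult_pos_pos)
  qed
  have "T \<noteq> {}"
    using assms(6) by blast
  have "0 < (sum w' T + y) * (pl_top_set w' T y - pl_top_set w T y)"
    unfolding pl_top_set_weights_diff[OF assms(1) \<open>T \<noteq> {}\<close> pos]
  proof (intro sum_pos2[OF assms(1,6)])
    show "0 < w' t\<^sub>0 * (pl_top_set w' (T - {t\<^sub>0}) y - pl_top_set w (T - {t\<^sub>0}) y)
            + (w' t\<^sub>0 - w t\<^sub>0) * (pl_top_set w (T - {t\<^sub>0}) y - pl_top_set w T y)"
      using terms[OF assms(6)] assms(7) by linarith
  qed (use terms in \<open>auto intro: add_nonneg_nonneg\<close>)
  then show ?thesis
    using pos(2) by (simp add: zero_less_mult_iff)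
qed

lemma pl_prefix_scale: "c > 0 \<Longrightarrow> pl_prefix (\<lambda>i. c * w i) (c * y) \<tau> = pl_prefix w y \<tau>"
proof (induction \<tau>)
  case (Cons t ts)
  have "c * w t + sum_list (map (\<lambda>i. c * w i) ts) + c * y = c * (w t + sum_list (map w ts) + y)"
    by (simp add: sum_list_const_mult algebra_simps)
  with Cons show ?case
    by simp
qed simp

lemma pl_top_set_scale: "c > 0 \<Longrightarrow> pl_top_set (\<lambda>i. c * w i) T (c * y) = pl_top_set w T y"
  unfolding pl_top_set_def by (simp add: pl_prefix_scale)

lemma pl_top_set_less_shift_weight:
  assumes "finite T" "T \<noteq> {}" "finite B" "B \<noteq> {}" "\<And>x. w x > 0" "\<And>x. w' x > 0"
    and "\<forall>t\<in>T. w t \<le> w' t" "\<forall>b\<in>B. w' b \<le> w b"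
    and "(\<exists>t\<in>T. w t < w' t) \<or> (\<exists>b\<in>B. w' b < w b)"
  shows "pl_top_set w T (sum w B) < pl_top_set w' T (sum w' B)"
proof -
  have y: "sum w' B > 0" "sum w B > 0"
    using assms(3-6) by (auto intro: sum_pos)
  have rest: "pl_top_set w T (sum w B) \<le> pl_top_set w T (sum w' B)"
    using assms(8) y by (intro pl_top_set_antimono_rest[OF assms(1,5)] sum_mono) auto
  have top: "pl_top_set w T (sum w' B) \<le> pl_top_set w' T (sum w' B)"
    by (rule pl_top_set_mono_weights[OF assms(1,5,6) y(1) assms(7)])
  from assms(9) show ?thesis
  proof
    assume "\<exists>t\<in>T. w t < w' t"
    then show ?thesis
      using rest pl_top_set_strict_mono_weights[OF assms(1,5,6) y(1) assms(7)] by fastforce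
  next
    assume "\<exists>b\<in>B. w' b < w b"
    then have "sum w' B < sum w B"
      using assms(3,8) by (intro sum_strict_mono_ex1) auto
    then show ?thesis
      using pl_top_set_strict_antimono_rest[of T w "sum w' B" "sum w B"] assms(1,2,5) y top by simp
  qed
qed

section \<open>Identifiability and Gibbs' inequality\<close>

lemma PL_prob_pos: "PL_prob \<theta> \<sigma> > 0"
  unfolding PL_prob_eq_pl_ranking by (rule pl_ranking_pos) simp

lemma sum_PL_prob_eq_1: "(\<Sum>\<sigma>\<in>permutations_of_set (UNIV :: 'a::finite set). PL_prob \<theta> \<sigma>) = 1"
  unfolding PL_prob_eq_pl_ranking by (rule sum_pl_ranking_eq_1) auto

lemma P_BT_pos: "finite T \<Longrightarrow> P_BT \<theta> T B > 0"
  unfolding P_BT_eq_pl_top_set by (rule pl_top_set_pos) (auto intro: sum_nonneg less_imp_le)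

lemma P_BT_eq_pl_top_set_shift:
  "P_BT \<theta> T B = pl_top_set (\<lambda>i. exp (\<theta> i - c)) T (\<Sum>i\<in>B. exp (\<theta> i - c))"
proof -
  have "P_BT \<theta> T B = pl_top_set (\<lambda>i. exp (- c) * exp (\<theta> i)) T (exp (- c) * (\<Sum>i\<in>B. exp (\<theta> i)))"
    unfolding P_BT_eq_pl_top_set by (rule pl_top_set_scale[symmetric]) simp
  then show ?thesis
    by (simp add: sum_distrib_left exp_diff exp_minus field_simps)
qed

text \<open>Shifting \<open>\<theta>\<close> by \<open>c\<close> does not change \<open>P_BT\<close>, and afterwards the weights of \<open>T\<close> have grown and
  those of \<open>B\<close> have shrunk compared to \<open>\<theta>\<^sub>s\<close>.\<close>

lemma P_BT_less_of_separating_level: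
  assumes "finite T" "T \<noteq> {}" "finite B" "B \<noteq> {}"
    and "\<forall>t\<in>T. c \<le> \<theta> t - \<theta>\<^sub>s t" "\<forall>b\<in>B. \<theta> b - \<theta>\<^sub>s b \<le> c"
    and "(\<exists>t\<in>T. c < \<theta> t - \<theta>\<^sub>s t) \<or> (\<exists>b\<in>B. \<theta> b - \<theta>\<^sub>s b < c)"
  shows "P_BT \<theta>\<^sub>s T B < P_BT \<theta> T B"
  unfolding P_BT_eq_pl_top_set[of \<theta>\<^sub>s] P_BT_eq_pl_top_set_shift[of \<theta> T B c]
  by (rule pl_top_set_less_shift_weight[OF assms(1-4)]) (use assms(5-7) in \<open>auto simp: algebra_simps\<close>)

lemma exists_antimono_enumeration:
  fixes \<delta> :: "'a::finite \<Rightarrow> real"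
  obtains L where "L \<in> permutations_of_set UNIV"
    "\<And>p r. p \<le> r \<Longrightarrow> r < CARD('a) \<Longrightarrow> \<delta> (L ! r) \<le> \<delta> (L ! p)"
proof -
  obtain xs where xs: "set xs = (UNIV :: 'a set)" "distinct xs"
    using finite_distinct_list[of "UNIV :: 'a set"] by auto
  define L where "L = sort_key (\<lambda>i. - \<delta> i) xs"
  have "L \<in> permutations_of_set UNIV"
    using xs unfolding L_def by auto
  moreover have "length L = CARD('a)"
    using xs unfolding L_def by (simp add: distinct_card[symmetric])
  moreover have "sorted (map (\<lambda>i. - \<delta> i) L)"
    unfolding L_def by (rule sorted_sort_key)
  ultimately show ?thesis
  proof (intro that)
    fix p r :: nat assume "p \<le> r" "r < CARD('a)"
    with \<open>length L = CARD('a)\<close> show "\<delta> (L ! r) \<le> \<delta> (L ! p)"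
      using sorted_nth_mono[OF \<open>sorted (map (\<lambda>i. - \<delta> i) L)\<close>, of p r] by simp
  qed
qed

lemma exists_permutation_move_prefix:
  assumes "L \<in> permutations_of_set A" "q + k \<le> length L"
  obtains x where "x \<in> permutations_of_set A" "take k (drop q x) = take k L" "drop (q + k) x = drop (q + k) L"
proof
  define x where "x = take q (drop k L) @ take k L @ drop (k + q) L"
  have "mset L = mset (take k L) + mset (drop k L)"
    by (metis append_take_drop_id mset_append)
  also have "mset (drop k L) = mset (take q (drop k L)) + mset (drop (k + q) L)"
    by (metis append_take_drop_id mset_append drop_drop add.commute)
  finally have "mset x = mset L"
    unfolding x_def by (simp add: ac_simps)
  then show "x \<in> permutations_of_set A"
    using assms(1) mset_eq_setD[of x L] mset_eq_imp_distinct_iff[of x L]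
    by (auto simp: permutations_of_set_def)
  have "length (take q (drop k L)) = q"
    using assms(2) by simp
  then show "take k (drop q x) = take k L" "drop (q + k) x = drop (q + k) L"
    using assms(2) unfolding x_def by (simp_all add: add.commute)
qed

text \<open>The level is the \<open>k\<close>-th largest value of \<open>\<delta>\<close>; it is strictly exceeded at the top or strictly
  undercut at the bottom of the enumeration, for otherwise \<open>\<delta>\<close> would be constant.\<close>

lemma antimono_enumeration_separating_level:
  fixes \<delta> :: "'a::finite \<Rightarrow> real"
  assumes L: "L \<in> permutations_of_set UNIV" "\<And>p r. p \<le> r \<Longrightarrow> r < CARD('a) \<Longrightarrow> \<delta> (L ! r) \<le> \<delta> (L ! p)"
    and "\<delta> i \<noteq> \<delta> j" "1 \<le> k" "k \<le> n" "n < CARD('a)"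
  shows "\<exists>c. (\<forall>t\<in>set (take k L). c \<le> \<delta> t) \<and> (\<forall>b\<in>set (drop n L). \<delta> b \<le> c) \<and>
           ((\<exists>t\<in>set (take k L). c < \<delta> t) \<or> (\<exists>b\<in>set (drop n L). \<delta> b < c))"
proof -
  define c where "c = \<delta> (L ! (k - 1))"
  define d where "d = CARD('a)"
  have len: "length L = d" and set: "set L = UNIV"
    using L(1) unfolding d_def by (auto simp: length_finite_permutations_of_set dest: permutations_of_setD)
  have above: "c \<le> \<delta> t" if t: "t \<in> set (take k L)" for t
  proof -
    obtain p where "p < length (take k L)" "take k L ! p = t"
      using t unfolding in_set_conv_nth by blast
    then have "p < k" "t = L ! p"
      by simp_all
    then show ?thesis
      unfolding c_def using L(2)[of p "k - 1"] assms(5,6) by simp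
  qed
  have below: "\<delta> b \<le> c" if b: "b \<in> set (drop n L)" for b
  proof -
    obtain r where "r < length (drop n L)" "drop n L ! r = b"
      using b unfolding in_set_conv_nth by blast
    then show ?thesis
      unfolding c_def using L(2)[of "k - 1" "n + r"] assms(5) len unfolding d_def by simp
  qed
  have "take k L ! 0 = L ! 0" "0 < length (take k L)"
    using assms(4-6) len unfolding d_def by auto
  then have "L ! 0 \<in> set (take k L)"
    by (metis nth_mem)
  moreover have "drop n L ! (d - 1 - n) = L ! (d - 1)" "d - 1 - n < length (drop n L)"
    using assms(6) len unfolding d_def by auto
  then have "L ! (d - 1) \<in> set (drop n L)"
    by (metis nth_mem)
  moreover have "c < \<delta> (L ! 0) \<or> \<delta> (L ! (d - 1)) < c"
  proof (rule ccontr)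
    assume not_strict: "\<not> ?thesis"
    have "\<delta> x = c" for x
    proof -
      obtain p where "p < d" "x = L ! p"
        using set len by (metis UNIV_I in_set_conv_nth)
      then have "\<delta> x \<le> \<delta> (L ! 0)" "\<delta> (L ! (d - 1)) \<le> \<delta> x"
        using L(2)[of 0 p] L(2)[of p "d - 1"] unfolding d_def by auto
      with not_strict show ?thesis
        by linarith
    qed
    with assms(3) show False
      by simp
  qed
  ultimately show ?thesis
    using above below by blast
qed

lemma exists_permutation_separating_level:
  fixes \<delta> :: "'a::finite \<Rightarrow> real"
  assumes "\<delta> i \<noteq> \<delta> j" "1 \<le> k" "q + k < CARD('a)"
  shows "\<exists>x\<in>permutations_of_set UNIV. \<exists>c.
           (\<forall>t\<in>set (take k (drop q x)). c \<le> \<delta> t) \<and> (\<forall>b\<in>set (drop (q + k) x). \<delta> b \<le> c) \<and>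
           ((\<exists>t\<in>set (take k (drop q x)). c < \<delta> t) \<or> (\<exists>b\<in>set (drop (q + k) x). \<delta> b < c))"
proof -
  obtain L where L: "L \<in> permutations_of_set UNIV"
    "\<And>p r. p \<le> r \<Longrightarrow> r < CARD('a) \<Longrightarrow> \<delta> (L ! r) \<le> \<delta> (L ! p)"
    using exists_antimono_enumeration by blast
  text \<open>Put the \<open>k\<close> items with the largest \<open>\<delta>\<close> at positions \<open>q+1..q+k\<close>.\<close>
  have "q + k \<le> length L"
    using assms(3) L(1) by (simp add: length_finite_permutations_of_set)
  then obtain x where x: "x \<in> permutations_of_set UNIV"
    "take k (drop q x) = take k L" "drop (q + k) x = drop (q + k) L"
    using exists_permutation_move_prefix[OF L(1)] by blast
  have "k \<le> q + k"
    by simp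
  from antimono_enumeration_separating_level[OF L assms(1,2) this assms(3), folded x(2,3)] show ?thesis
    by (rule bexI[OF _ x(1)])
qed

lemma nonconstant_diff_of_sum_eq:
  fixes \<theta> \<theta>\<^sub>s :: "'a::finite \<Rightarrow> real"
  assumes "(\<Sum>i\<in>UNIV. \<theta> i) = (\<Sum>i\<in>UNIV. \<theta>\<^sub>s i)" "\<theta> \<noteq> \<theta>\<^sub>s"
  obtains i j where "\<theta> i - \<theta>\<^sub>s i \<noteq> \<theta> j - \<theta>\<^sub>s j"
proof (rule ccontr)
  assume "\<not> thesis"
  then have "\<theta> i - \<theta>\<^sub>s i = \<theta> undefined - \<theta>\<^sub>s undefined" for i
    using that by blast
  moreover have "(\<Sum>i\<in>UNIV. \<theta> i - \<theta>\<^sub>s i) = 0"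
    using assms(1) by (simp add: sum_subtractf)
  ultimately have "real CARD('a) * (\<theta> undefined - \<theta>\<^sub>s undefined) = 0"
    by (metis (no_types, lifting) sum.cong sum_constant)
  then have "\<theta> i - \<theta>\<^sub>s i = 0" for i
    using \<open>\<theta> i - \<theta>\<^sub>s i = \<theta> undefined - \<theta>\<^sub>s undefined\<close> by simp
  with assms(2) show False
    by auto
qed

text \<open>For a ranking of all items the top set of block \<open>a\<close> has exactly \<open>m\<^sub>a\<close> elements
  (\<open>card_top_set\<close>), so the edges with \<open>|T| \<le> M\<close> are those of the blocks in \<open>used_blocks\<close>.\<close>

definition used_blocks :: "nat list \<Rightarrow> nat \<Rightarrow> nat set" where
  "used_blocks ms M = {a. a < length ms \<and> ms ! a \<le> M}"

definition ranking_loglik :: "nat list \<Rightarrow> nat \<Rightarrow> ('a \<Rightarrow> real) \<Rightarrow> 'a list \<Rightarrow> real" where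
  "ranking_loglik ms M \<theta> \<sigma> =
     (\<Sum>a\<in>used_blocks ms M. ln (P_BT \<theta> (top_set ms \<sigma> a) (bottom_set ms \<sigma> a)))"

definition expected_loglik :: "nat list \<Rightarrow> nat \<Rightarrow> ('a::finite \<Rightarrow> real) \<Rightarrow> ('a \<Rightarrow> real) \<Rightarrow> real" where
  "expected_loglik ms M \<theta>\<^sub>s \<theta> =
     (\<Sum>\<sigma>\<in>permutations_of_set UNIV. PL_prob \<theta>\<^sub>s \<sigma> * ranking_loglik ms M \<theta> \<sigma>)"

lemma block_end_le_sum_list:
  assumes "a < length ms"
  shows "sum_list (take a ms) + ms ! a \<le> sum_list (ms :: nat list)"
proof -
  have "sum_list (take (Suc a) ms) \<le> sum_list ms"
    by (metis append_take_drop_id le_add1 sum_list_append)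
  then show ?thesis
    using assms by (simp add: take_Suc_conv_app_nth)
qed

lemma bottom_set_eq:
  "a < length ms \<Longrightarrow> bottom_set ms \<sigma> a = set (drop (sum_list (take a ms) + ms ! a) \<sigma>)"
  by (simp add: bottom_set_def take_Suc_conv_app_nth)

lemma card_top_set:
  assumes "\<sigma> \<in> permutations_of_set (UNIV :: 'a::finite set)" "a < length ms"
    and "sum_list ms < CARD('a)"
  shows "card (top_set ms \<sigma> a) = ms ! a"
proof -
  have "distinct \<sigma>" "length \<sigma> = CARD('a)"
    using assms(1) by (auto simp: permutations_of_set_def distinct_card[symmetric])
  then show ?thesis
    using block_end_le_sum_list[OF assms(2)] assms(3) by (simp add: top_set_def distinct_card)
qed

lemma sum_PL_prob_block_ratio:
  assumes "sum_list ms < CARD('a::finite)" "a < length ms"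
  shows "(\<Sum>\<sigma>\<in>permutations_of_set (UNIV :: 'a set). PL_prob \<theta>\<^sub>s \<sigma> *
          (P_BT \<theta> (top_set ms \<sigma> a) (bottom_set ms \<sigma> a) / P_BT \<theta>\<^sub>s (top_set ms \<sigma> a) (bottom_set ms \<sigma> a))) = 1"
  using sum_pl_ranking_block_ratio[of "UNIV :: 'a set" "sum_list (take a ms)" "ms ! a"
      "\<lambda>i. exp (\<theta> i)" "\<lambda>i. exp (\<theta>\<^sub>s i)"] block_end_le_sum_list[OF assms(2)] assms
  unfolding P_BT_eq_pl_top_set PL_prob_eq_pl_ranking top_set_def bottom_set_eq[OF assms(2)] by simp

text \<open>Gibbs' inequality, from \<open>sum_PL_prob_block_ratio\<close> and \<open>ln x \<le> x - 1\<close>.\<close>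

lemma expected_loglik_less:
  fixes \<theta> \<theta>\<^sub>s :: "'a::finite \<Rightarrow> real"
  assumes "sum_list ms < CARD('a)"
    and "\<exists>a\<in>used_blocks ms M. \<exists>\<sigma>\<in>permutations_of_set UNIV.
           P_BT \<theta> (top_set ms \<sigma> a) (bottom_set ms \<sigma> a) \<noteq> P_BT \<theta>\<^sub>s (top_set ms \<sigma> a) (bottom_set ms \<sigma> a)"
  shows "expected_loglik ms M \<theta>\<^sub>s \<theta> < expected_loglik ms M \<theta>\<^sub>s \<theta>\<^sub>s"
proof -
  define X where "X = permutations_of_set (UNIV :: 'a set)"
  define U where "U = used_blocks ms M"
  define p where "p = PL_prob \<theta>\<^sub>s"
  define R where "R \<sigma> a = P_BT \<theta> (top_set ms \<sigma> a) (bottom_set ms \<sigma> a) / P_BT \<theta>\<^sub>s (top_set ms \<sigma> a) (bottom_set ms \<sigma> a)"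
    for \<sigma> a
  have P_pos: "P_BT \<theta>' (top_set ms \<sigma> a) (bottom_set ms \<sigma> a) > 0" for \<theta>' \<sigma> a
    by (rule P_BT_pos) (simp add: top_set_def)
  have R_pos: "R \<sigma> a > 0" for \<sigma> a
    unfolding R_def by (intro divide_pos_pos P_pos)
  have "finite X" "finite U"
    unfolding X_def U_def used_blocks_def by simp_all
  have "expected_loglik ms M \<theta>\<^sub>s \<theta> - expected_loglik ms M \<theta>\<^sub>s \<theta>\<^sub>s = (\<Sum>\<sigma>\<in>X. \<Sum>a\<in>U. p \<sigma> * ln (R \<sigma> a))"
    unfolding expected_loglik_def ranking_loglik_def X_def[symmetric] U_def[symmetric] p_def[symmetric] R_def
    using P_pos by (simp add: sum_subtractf[symmetric] sum_distrib_left[symmetric] right_diff_distrib[symmetric]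
        ln_div less_imp_neq[OF P_pos, THEN not_sym])
  also have "\<dots> < (\<Sum>\<sigma>\<in>X. \<Sum>a\<in>U. p \<sigma> * (R \<sigma> a - 1))"
  proof -
    obtain a\<^sub>0 \<sigma>\<^sub>0 where "a\<^sub>0 \<in> U" "\<sigma>\<^sub>0 \<in> X" "R \<sigma>\<^sub>0 a\<^sub>0 \<noteq> 1"
      using assms(2) P_pos unfolding U_def X_def R_def by fastforce
    have le: "p \<sigma> * ln (R \<sigma> a) \<le> p \<sigma> * (R \<sigma> a - 1)" for \<sigma> a
      using ln_le_minus_one[OF R_pos] PL_prob_pos[of \<theta>\<^sub>s \<sigma>] unfolding p_def by simp
    have "p \<sigma>\<^sub>0 * ln (R \<sigma>\<^sub>0 a\<^sub>0) < p \<sigma>\<^sub>0 * (R \<sigma>\<^sub>0 a\<^sub>0 - 1)"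
      using ln_le_minus_one[OF R_pos, of \<sigma>\<^sub>0 a\<^sub>0] ln_eq_minus_one[OF R_pos, of \<sigma>\<^sub>0 a\<^sub>0] \<open>R \<sigma>\<^sub>0 a\<^sub>0 \<noteq> 1\<close>
        PL_prob_pos[of \<theta>\<^sub>s \<sigma>\<^sub>0]
      unfolding p_def by (auto simp: less_le)
    then have "(\<Sum>a\<in>U. p \<sigma>\<^sub>0 * ln (R \<sigma>\<^sub>0 a)) < (\<Sum>a\<in>U. p \<sigma>\<^sub>0 * (R \<sigma>\<^sub>0 a - 1))"
      using \<open>finite U\<close> \<open>a\<^sub>0 \<in> U\<close> le by (intro sum_strict_mono_ex1) auto
    then show ?thesis
      using \<open>finite X\<close> \<open>\<sigma>\<^sub>0 \<in> X\<close> le by (intro sum_strict_mono_ex1) (auto intro: sum_mono)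
  qed
  also have "\<dots> = (\<Sum>a\<in>U. (\<Sum>\<sigma>\<in>X. p \<sigma> * R \<sigma> a) - (\<Sum>\<sigma>\<in>X. p \<sigma>))"
    by (subst sum.swap) (simp add: right_diff_distrib sum_subtractf)
  also have "\<dots> = 0"
    using sum_PL_prob_block_ratio[OF assms(1), of _ \<theta>\<^sub>s \<theta>] sum_PL_prob_eq_1[of \<theta>\<^sub>s]
    unfolding U_def X_def p_def R_def used_blocks_def by simp
  finally show ?thesis
    by simp
qed

text \<open>Identifiability: a block of minimal size is used, and a ranking placing the items where
  \<open>\<theta> - \<theta>\<^sub>s\<close> is largest in this block and those where it is smallest below it separates the
  two parameters.\<close>

lemma exists_used_block_P_BT_ne:
  fixes \<theta> \<theta>\<^sub>s :: "'a::finite \<Rightarrow> real"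
  assumes "ms \<noteq> []" "\<forall>m\<in>set ms. m \<ge> 1" "sum_list ms < CARD('a)" "M \<ge> Min (set ms)"
    and "(\<Sum>i\<in>UNIV. \<theta> i) = (\<Sum>i\<in>UNIV. \<theta>\<^sub>s i)" "\<theta> \<noteq> \<theta>\<^sub>s"
  shows "\<exists>a\<in>used_blocks ms M. \<exists>\<sigma>\<in>permutations_of_set UNIV.
           P_BT \<theta> (top_set ms \<sigma> a) (bottom_set ms \<sigma> a) \<noteq> P_BT \<theta>\<^sub>s (top_set ms \<sigma> a) (bottom_set ms \<sigma> a)"
proof -
  obtain a where a: "a < length ms" "ms ! a = Min (set ms)"
    using Min_in[of "set ms"] assms(1) by (metis List.finite_set in_set_conv_nth set_empty)
  define q where "q = sum_list (take a ms)"
  define k where "k = ms ! a"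
  have "1 \<le> k"
    unfolding k_def using assms(2) nth_mem[OF a(1)] by blast
  moreover have "a \<in> used_blocks ms M" "q + k < CARD('a)"
    using a assms(3,4) block_end_le_sum_list[OF a(1)] unfolding used_blocks_def k_def q_def
    by auto
  moreover obtain i j where "\<theta> i - \<theta>\<^sub>s i \<noteq> \<theta> j - \<theta>\<^sub>s j"
    using nonconstant_diff_of_sum_eq[OF assms(5,6)] .
  ultimately obtain \<sigma> c where \<sigma>: "\<sigma> \<in> permutations_of_set UNIV"
    and sep: "\<forall>t\<in>set (take k (drop q \<sigma>)). c \<le> \<theta> t - \<theta>\<^sub>s t" "\<forall>b\<in>set (drop (q + k) \<sigma>). \<theta> b - \<theta>\<^sub>s b \<le> c"
      "(\<exists>t\<in>set (take k (drop q \<sigma>)). c < \<theta> t - \<theta>\<^sub>s t) \<or> (\<exists>b\<in>set (drop (q + k) \<sigma>). \<theta> b - \<theta>\<^sub>s b < c)"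
    using exists_permutation_separating_level[of "\<lambda>i. \<theta> i - \<theta>\<^sub>s i" i j k q] by blast
  have "length \<sigma> = CARD('a)"
    using \<sigma> by (simp add: length_finite_permutations_of_set)
  then have "set (take k (drop q \<sigma>)) \<noteq> {}" "set (drop (q + k) \<sigma>) \<noteq> {}"
    using \<open>1 \<le> k\<close> \<open>q + k < CARD('a)\<close> by auto
  then have "P_BT \<theta>\<^sub>s (set (take k (drop q \<sigma>))) (set (drop (q + k) \<sigma>))
           < P_BT \<theta> (set (take k (drop q \<sigma>))) (set (drop (q + k) \<sigma>))"
    by (intro P_BT_less_of_separating_level[where c = c] sep) auto
  moreover have "top_set ms \<sigma> a = set (take k (drop q \<sigma>))" "bottom_set ms \<sigma> a = set (drop (q + k) \<sigma>)"
    unfolding top_set_def bottom_set_eq[OF a(1)] q_def k_def by simp_all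
  ultimately show ?thesis
    using \<open>a \<in> used_blocks ms M\<close> \<sigma> by (metis less_irrefl)
qed

section \<open>Concentration of ranking frequencies\<close>

definition expect_n :: "('a::finite \<Rightarrow> real) \<Rightarrow> nat \<Rightarrow> ('a list list \<Rightarrow> real) \<Rightarrow> real" where
  "expect_n \<theta> n h = (\<Sum>data\<in>samples n. (\<Prod>j<n. PL_prob \<theta> (data ! j)) * h data)"

lemma samples_0: "samples 0 = {[]}"
  by (auto simp: samples_def)

lemma samples_Suc:
  "samples (Suc n) = (\<lambda>(\<sigma>, data). \<sigma> # data) ` (permutations_of_set (UNIV :: 'a::finite set) \<times> samples n)"
proof (rule set_eqI)
  fix data :: "'a list list"
  show "data \<in> samples (Suc n) \<longleftrightarrow> data \<in> (\<lambda>(\<sigma>, data). \<sigma> # data) ` (permutations_of_set UNIV \<times> samples n)"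
    by (cases data) (auto simp: samples_def image_iff)
qed

lemma finite_samples: "finite (samples n :: 'a::finite list list set)"
proof (rule finite_subset)
  show "samples n \<subseteq> {xs. set xs \<subseteq> permutations_of_set (UNIV :: 'a set) \<and> length xs = n}"
    unfolding samples_def by auto
qed (rule finite_lists_length_eq, simp)

lemma expect_n_0: "expect_n \<theta> 0 h = h []"
  by (simp add: expect_n_def samples_0)

lemma expect_n_Suc:
  "expect_n \<theta> (Suc n) h = (\<Sum>\<sigma>\<in>permutations_of_set UNIV. PL_prob \<theta> \<sigma> * expect_n \<theta> n (\<lambda>data. h (\<sigma> # data)))"
proof -
  have inj: "inj_on (\<lambda>(\<sigma>, data). \<sigma> # data) (permutations_of_set (UNIV :: 'a set) \<times> samples n)"
    by (auto simp: inj_on_def)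
  have "expect_n \<theta> (Suc n) h
      = (\<Sum>(\<sigma>, data)\<in>permutations_of_set UNIV \<times> samples n. (\<Prod>j<Suc n. PL_prob \<theta> ((\<sigma> # data) ! j)) * h (\<sigma> # data))"
    unfolding expect_n_def samples_Suc by (subst sum.reindex[OF inj]) (simp add: case_prod_unfold)
  also have "\<dots> = (\<Sum>\<sigma>\<in>permutations_of_set UNIV. \<Sum>data\<in>samples n. PL_prob \<theta> \<sigma> * ((\<Prod>j<n. PL_prob \<theta> (data ! j)) * h (\<sigma> # data)))"
    by (subst sum.cartesian_product[symmetric])
      (simp add: prod.lessThan_Suc_shift mult.assoc del: prod.lessThan_Suc)
  finally show ?thesis
    by (simp add: expect_n_def sum_distrib_left)
qed

lemma expect_n_add: "expect_n \<theta> n (\<lambda>data. f data + g data) = expect_n \<theta> n f + expect_n \<theta> n g"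
  by (simp add: expect_n_def distrib_left sum.distrib)

lemma expect_n_cmult: "expect_n \<theta> n (\<lambda>data. c * f data) = c * expect_n \<theta> n f"
  by (simp add: expect_n_def sum_distrib_left ac_simps)

lemma expect_n_const: "expect_n \<theta> n (\<lambda>data. c) = c"
  by (induction n) (simp_all add: expect_n_0 expect_n_Suc flip: sum_distrib_right add: sum_PL_prob_eq_1)

lemma expect_n_sum:
  "finite A \<Longrightarrow> expect_n \<theta> n (\<lambda>data. \<Sum>x\<in>A. g x data) = (\<Sum>x\<in>A. expect_n \<theta> n (g x))"
  unfolding expect_n_def by (simp add: sum_distrib_left sum.swap[of _ "samples n"])

lemma expect_n_mono:
  "(\<And>data. data \<in> samples n \<Longrightarrow> f data \<le> g data) \<Longrightarrow> expect_n \<theta> n f \<le> expect_n \<theta> n g"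
  unfolding expect_n_def
  by (intro sum_mono mult_left_mono prod_nonneg) (auto intro: less_imp_le PL_prob_pos)

lemma prob_n_eq_expect_n: "prob_n \<theta> n E = expect_n \<theta> n (\<lambda>data. if E data then 1 else 0)"
  unfolding prob_n_def expect_n_def
  by (subst sum.inter_filter[OF finite_samples]) (auto intro: sum.cong)

lemma prob_n_nonneg: "prob_n \<theta> n E \<ge> 0"
  unfolding prob_n_def by (intro sum_nonneg prod_nonneg) (auto intro: less_imp_le PL_prob_pos)

lemma prob_n_mono:
  "(\<And>data. data \<in> samples n \<Longrightarrow> E data \<Longrightarrow> E' data) \<Longrightarrow> prob_n \<theta> n E \<le> prob_n \<theta> n E'"
  unfolding prob_n_eq_expect_n by (rule expect_n_mono) auto

lemma sum_PL_prob_indicator: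
  "\<sigma>\<^sub>0 \<in> permutations_of_set (UNIV :: 'a::finite set) \<Longrightarrow>
   (\<Sum>\<sigma>\<in>permutations_of_set UNIV. PL_prob \<theta> \<sigma> * (if \<sigma> = \<sigma>\<^sub>0 then 1 else 0)) = PL_prob \<theta> \<sigma>\<^sub>0"
  by (simp add: if_distrib cong: if_cong)

lemma real_count_list_Cons:
  "real (count_list (x # xs) y) = (if x = y then 1 else 0) + real (count_list xs y)"
  by simp

lemma expect_n_count_centered:
  assumes "\<sigma>\<^sub>0 \<in> permutations_of_set (UNIV :: 'a::finite set)"
  shows "expect_n \<theta> n (\<lambda>data. real (count_list data \<sigma>\<^sub>0) - real n * PL_prob \<theta> \<sigma>\<^sub>0) = 0"
proof (induction n)
  case (Suc n)
  define p where "p = PL_prob \<theta> \<sigma>\<^sub>0"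
  have "expect_n \<theta> (Suc n) (\<lambda>data. real (count_list data \<sigma>\<^sub>0) - real (Suc n) * p)
      = (\<Sum>\<sigma>\<in>permutations_of_set UNIV. PL_prob \<theta> \<sigma> *
           expect_n \<theta> n (\<lambda>data. ((if \<sigma> = \<sigma>\<^sub>0 then 1 else 0) - p) + (real (count_list data \<sigma>\<^sub>0) - real n * p)))"
    unfolding expect_n_Suc real_count_list_Cons by (simp add: algebra_simps del: count_list.simps)
  also have "\<dots> = (\<Sum>\<sigma>\<in>permutations_of_set UNIV. PL_prob \<theta> \<sigma> * ((if \<sigma> = \<sigma>\<^sub>0 then 1 else 0) - p))"
    using Suc unfolding p_def by (simp add: expect_n_add expect_n_const)
  also have "\<dots> = 0"
    using sum_PL_prob_indicator[OF assms, of \<theta>] sum_PL_prob_eq_1[of \<theta>] unfolding p_def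
    by (simp add: right_diff_distrib sum_subtractf flip: sum_distrib_right)
  finally show ?case
    unfolding p_def .
qed (simp add: expect_n_0)

lemma expect_n_count_variance:
  assumes "\<sigma>\<^sub>0 \<in> permutations_of_set (UNIV :: 'a::finite set)"
  shows "expect_n \<theta> n (\<lambda>data. (real (count_list data \<sigma>\<^sub>0) - real n * PL_prob \<theta> \<sigma>\<^sub>0)\<^sup>2)
       = real n * (PL_prob \<theta> \<sigma>\<^sub>0 - (PL_prob \<theta> \<sigma>\<^sub>0)\<^sup>2)"
proof (induction n)
  case (Suc n)
  define p where "p = PL_prob \<theta> \<sigma>\<^sub>0"
  define I where "I \<sigma> = (if \<sigma> = \<sigma>\<^sub>0 then 1 else (0::real))" for \<sigma>
  have "expect_n \<theta> (Suc n) (\<lambda>data. (real (count_list data \<sigma>\<^sub>0) - real (Suc n) * p)\<^sup>2)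
      = (\<Sum>\<sigma>\<in>permutations_of_set UNIV. PL_prob \<theta> \<sigma> * expect_n \<theta> n (\<lambda>data. (I \<sigma> - p)\<^sup>2
           + 2 * (I \<sigma> - p) * (real (count_list data \<sigma>\<^sub>0) - real n * p) + (real (count_list data \<sigma>\<^sub>0) - real n * p)\<^sup>2))"
    unfolding expect_n_Suc real_count_list_Cons I_def by (simp add: power2_eq_square algebra_simps del: count_list.simps)
  also have "\<dots> = (\<Sum>\<sigma>\<in>permutations_of_set UNIV. PL_prob \<theta> \<sigma> * ((I \<sigma> - p)\<^sup>2 + real n * (p - p\<^sup>2)))"
    using Suc expect_n_count_centered[OF assms, of \<theta> n] unfolding p_def
    by (simp add: expect_n_add expect_n_const expect_n_cmult)
  also have "\<dots> = (\<Sum>\<sigma>\<in>permutations_of_set UNIV. PL_prob \<theta> \<sigma> * (I \<sigma> * (1 - 2 * p) + p\<^sup>2 + real n * (p - p\<^sup>2)))"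
    by (intro sum.cong refl) (simp add: I_def power2_eq_square algebra_simps)
  also have "\<dots> = p * (1 - 2 * p) + p\<^sup>2 + real n * (p - p\<^sup>2)"
    using sum_PL_prob_indicator[OF assms, of \<theta>] sum_PL_prob_eq_1[of \<theta>] unfolding p_def I_def
    by (simp add: distrib_left sum.distrib flip: mult.assoc sum_distrib_right)
  also have "\<dots> = real (Suc n) * (p - p\<^sup>2)"
    by (simp add: power2_eq_square algebra_simps)
  finally show ?case
    unfolding p_def .
qed (simp add: expect_n_0)

lemma prob_count_deviation_le:
  assumes "\<sigma>\<^sub>0 \<in> permutations_of_set (UNIV :: 'a::finite set)" "\<eta> > 0" "n > 0"
  shows "prob_n \<theta> n (\<lambda>data. \<eta> < \<bar>real (count_list data \<sigma>\<^sub>0) / real n - PL_prob \<theta> \<sigma>\<^sub>0\<bar>) \<le> 1 / (real n * \<eta>\<^sup>2)"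
proof -
  define p where "p = PL_prob \<theta> \<sigma>\<^sub>0"
  have Markov: "(if \<eta> < \<bar>c / real n - p\<bar> then 1 else 0) \<le> (c - real n * p)\<^sup>2 / (real n * \<eta>)\<^sup>2"
    for c :: real
  proof (cases "\<eta> < \<bar>c / real n - p\<bar>")
    case True
    have "c / real n - p = (c - real n * p) / real n"
      using assms(3) by (simp add: field_simps)
    with True have "real n * \<eta> < \<bar>c - real n * p\<bar>"
      using assms(3) by (simp add: abs_divide field_simps)
    then have "(real n * \<eta>)\<^sup>2 < \<bar>c - real n * p\<bar>\<^sup>2"
      by (rule power_strict_mono) (use assms(2,3) in auto)
    with True assms(2,3) show ?thesis
      by (simp add: le_divide_eq)
  qed simp
  have "prob_n \<theta> n (\<lambda>data. \<eta> < \<bar>real (count_list data \<sigma>\<^sub>0) / real n - p\<bar>)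
      \<le> expect_n \<theta> n (\<lambda>data. (real (count_list data \<sigma>\<^sub>0) - real n * p)\<^sup>2 / (real n * \<eta>)\<^sup>2)"
    unfolding prob_n_eq_expect_n by (intro expect_n_mono Markov)
  also have "\<dots> = real n * (p - p\<^sup>2) / (real n * \<eta>)\<^sup>2"
    using expect_n_cmult[of \<theta> n "1 / (real n * \<eta>)\<^sup>2"] expect_n_count_variance[OF assms(1), of \<theta> n]
    unfolding p_def by simp
  also have "\<dots> \<le> real n / (real n * \<eta>)\<^sup>2"
  proof -
    have "(p - 1/2)\<^sup>2 = p\<^sup>2 - p + 1/4"
      by (simp add: power2_eq_square algebra_simps)
    then have "p - p\<^sup>2 \<le> 1"
      using zero_le_power2[of "p - 1/2"] by linarith
    then show ?thesis
      by (intro divide_right_mono mult_left_le) simp_all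
  qed
  also have "\<dots> = 1 / (real n * \<eta>\<^sup>2)"
    using assms(2,3) by (simp add: power2_eq_square)
  finally show ?thesis
    unfolding p_def .
qed

lemma prob_n_Bex_le_sum:
  assumes "finite X"
  shows "prob_n \<theta> n (\<lambda>data. \<exists>x\<in>X. E x data) \<le> (\<Sum>x\<in>X. prob_n \<theta> n (E x))"
proof -
  have "(if \<exists>x\<in>X. E x data then 1 else 0) \<le> (\<Sum>x\<in>X. if E x data then 1 else (0::real))" for data
  proof (cases "\<exists>x\<in>X. E x data")
    case True
    then obtain x where "x \<in> X" "E x data"
      by blast
    then show ?thesis
      using member_le_sum[of x X "\<lambda>x. if E x data then 1 else (0::real)"] assms by simp
  qed (simp add: sum_nonneg)
  then show ?thesis
    unfolding prob_n_eq_expect_n expect_n_sum[OF assms, symmetric] by (rule expect_n_mono)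
qed

lemma prob_count_deviation_tendsto_0:
  assumes "\<eta> > 0"
  shows "(\<lambda>n. prob_n \<theta> n (\<lambda>data. \<exists>\<sigma>\<in>permutations_of_set (UNIV :: 'a::finite set).
            \<eta> < \<bar>real (count_list data \<sigma>) / real n - PL_prob \<theta> \<sigma>\<bar>)) \<longlonglongrightarrow> 0"
proof (rule tendsto_sandwich[OF _ _ tendsto_const])
  define N where "N = real (card (permutations_of_set (UNIV :: 'a set)))"
  show "\<forall>\<^sub>F n in sequentially. 0 \<le> prob_n \<theta> n (\<lambda>data. \<exists>\<sigma>\<in>permutations_of_set UNIV.
            \<eta> < \<bar>real (count_list data \<sigma>) / real n - PL_prob \<theta> \<sigma>\<bar>)"
    by (simp add: prob_n_nonneg)
  show "\<forall>\<^sub>F n in sequentially. prob_n \<theta> n (\<lambda>data. \<exists>\<sigma>\<in>permutations_of_set UNIV.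
            \<eta> < \<bar>real (count_list data \<sigma>) / real n - PL_prob \<theta> \<sigma>\<bar>) \<le> N / \<eta>\<^sup>2 * inverse (real n)"
  proof (rule eventually_sequentiallyI[of 1])
    fix n :: nat assume "1 \<le> n"
    then have "prob_n \<theta> n (\<lambda>data. \<exists>\<sigma>\<in>permutations_of_set UNIV.
            \<eta> < \<bar>real (count_list data \<sigma>) / real n - PL_prob \<theta> \<sigma>\<bar>)
        \<le> (\<Sum>\<sigma>\<in>permutations_of_set (UNIV :: 'a set). 1 / (real n * \<eta>\<^sup>2))"
      using assms by (intro order.trans[OF prob_n_Bex_le_sum] sum_mono prob_count_deviation_le) auto
    then show "prob_n \<theta> n (\<lambda>data. \<exists>\<sigma>\<in>permutations_of_set UNIV.
            \<eta> < \<bar>real (count_list data \<sigma>) / real n - PL_prob \<theta> \<sigma>\<bar>) \<le> N / \<eta>\<^sup>2 * inverse (real n)"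
      unfolding N_def by (simp add: field_simps)
  qed
  show "(\<lambda>n. N / \<eta>\<^sup>2 * inverse (real n)) \<longlonglongrightarrow> 0"
    using tendsto_mult[OF tendsto_const lim_inverse_n, of "N / \<eta>\<^sup>2"] by simp
qed

section \<open>Consistency\<close>

lemma compact_Omega: "compact (Omega b :: ('a::finite \<Rightarrow> real) set)"
proof -
  have "Omega b = (\<Pi>\<^sub>E i\<in>UNIV. {-b..b}) \<inter> {\<theta>::'a \<Rightarrow> real. (\<Sum>i\<in>UNIV. \<theta> i) = 0}"
    unfolding Omega_def by (auto simp: PiE_iff abs_le_iff minus_le_iff)
  moreover have "compact (\<Pi>\<^sub>E i\<in>(UNIV :: 'a set). {-b..b})"
    using compactin_PiE[of "\<lambda>i. euclidean" UNIV "\<lambda>i. {-b..b}"]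
    by (simp add: euclidean_product_topology)
  moreover have "closed {\<theta>::'a \<Rightarrow> real. (\<Sum>i\<in>UNIV. \<theta> i) = 0}"
    by (intro closed_Collect_eq continuous_intros) auto
  ultimately show ?thesis
    by (simp add: compact_Int_closed)
qed

lemma compact_Omega_far:
  "compact {\<theta> \<in> Omega b. \<exists>i. \<epsilon> \<le> \<bar>\<theta> i - \<theta>\<^sub>s i\<bar>}"
proof -
  have "{\<theta> \<in> Omega b. \<exists>i. \<epsilon> \<le> \<bar>\<theta> i - \<theta>\<^sub>s i\<bar>} = Omega b \<inter> (\<Union>i. {\<theta>::'a::finite \<Rightarrow> real. \<epsilon> \<le> \<bar>\<theta> i - \<theta>\<^sub>s i\<bar>})"
    by auto
  moreover have "closed (\<Union>i. {\<theta>::'a \<Rightarrow> real. \<epsilon> \<le> \<bar>\<theta> i - \<theta>\<^sub>s i\<bar>})"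
    by (intro closed_Union) (auto intro!: closed_Collect_le continuous_intros)
  ultimately show ?thesis
    using compact_Int_closed[OF compact_Omega] by simp
qed

lemma continuous_on_P_BT: "continuous_on UNIV (\<lambda>\<theta>. P_BT \<theta> T B)"
proof -
  have "(\<Sum>c=u..<n. exp (f c)) + (\<Sum>i\<in>B. exp (g i)) \<noteq> (0::real)" if "u < n" for u n :: nat and f g
    using that by (intro add_pos_nonneg[THEN less_imp_neq, THEN not_sym] sum_pos sum_nonneg) auto
  then show ?thesis
    unfolding P_BT_def by (intro continuous_intros) auto
qed

lemma continuous_on_ranking_loglik: "continuous_on UNIV (\<lambda>\<theta>. ranking_loglik ms M \<theta> \<sigma>)"
  unfolding ranking_loglik_def
  by (intro continuous_intros continuous_on_ln continuous_on_P_BT)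
    (auto simp: top_set_def P_BT_pos less_imp_neq[THEN not_sym])

lemma continuous_on_expected_loglik: "continuous_on UNIV (expected_loglik ms M \<theta>\<^sub>s)"
  unfolding expected_loglik_def by (intro continuous_intros continuous_on_ranking_loglik)

lemma sum_list_map_eq_sum_of_nat_count:
  fixes f :: "'a \<Rightarrow> 'b::semiring_1"
  assumes "set xs \<subseteq> X" "finite X"
  shows "sum_list (map f xs) = (\<Sum>x\<in>X. of_nat (count_list xs x) * f x)"
  using assms(1)
proof (induction xs)
  case (Cons y xs)
  have "of_nat (count_list (y # xs) x) * f x = (if x = y then f x else 0) + of_nat (count_list xs x) * f x" for x
    by (simp add: algebra_simps)
  then have "(\<Sum>x\<in>X. of_nat (count_list (y # xs) x) * f x)
      = (\<Sum>x\<in>X. if x = y then f x else 0) + (\<Sum>x\<in>X. of_nat (count_list xs x) * f x)"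
    by (simp add: sum.distrib)
  with Cons assms(2) show ?case
    by simp
qed simp

lemma L_RB_eq_sum_count:
  assumes "data \<in> samples n" "sum_list ms < CARD('a::finite)"
  shows "L_RB ms M data \<theta>
       = (\<Sum>\<sigma>\<in>permutations_of_set (UNIV :: 'a set). real (count_list data \<sigma>) * ranking_loglik ms M \<theta> \<sigma>)"
proof -
  have data: "set data \<subseteq> permutations_of_set UNIV"
    using assms(1) unfolding samples_def by simp
  have "{a. a < length ms \<and> card (top_set ms (data ! j) a) \<le> M} = used_blocks ms M" if "j < length data" for j
    using card_top_set[OF _ _ assms(2), of "data ! j"] data nth_mem[OF that]
    unfolding used_blocks_def by auto
  then have "L_RB ms M data \<theta> = (\<Sum>j<length data. ranking_loglik ms M \<theta> (data ! j))"
    unfolding L_RB_def ranking_loglik_def by simp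
  also have "\<dots> = sum_list (map (ranking_loglik ms M \<theta>) data)"
    by (simp add: sum_list_sum_nth atLeast0LessThan)
  also have "\<dots> = (\<Sum>\<sigma>\<in>permutations_of_set UNIV. real (count_list data \<sigma>) * ranking_loglik ms M \<theta> \<sigma>)"
    by (rule sum_list_map_eq_sum_of_nat_count[OF data]) simp
  finally show ?thesis .
qed

lemma L_RB_approx_expected_loglik:
  assumes "data \<in> samples n" "n > 0" "sum_list ms < CARD('a::finite)"
    and "\<forall>\<sigma>\<in>permutations_of_set (UNIV :: 'a set). \<bar>real (count_list data \<sigma>) / real n - PL_prob \<theta>\<^sub>s \<sigma>\<bar> \<le> \<eta>"
  shows "\<bar>L_RB ms M data \<theta> / real n - expected_loglik ms M \<theta>\<^sub>s \<theta>\<bar>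
       \<le> \<eta> * (\<Sum>\<sigma>\<in>permutations_of_set (UNIV :: 'a set). \<bar>ranking_loglik ms M \<theta> \<sigma>\<bar>)"
proof -
  have "\<bar>L_RB ms M data \<theta> / real n - expected_loglik ms M \<theta>\<^sub>s \<theta>\<bar>
      = \<bar>\<Sum>\<sigma>\<in>permutations_of_set UNIV. (real (count_list data \<sigma>) / real n - PL_prob \<theta>\<^sub>s \<sigma>) * ranking_loglik ms M \<theta> \<sigma>\<bar>"
    unfolding L_RB_eq_sum_count[OF assms(1,3)] expected_loglik_def
    by (simp add: sum_divide_distrib sum_subtractf[symmetric] left_diff_distrib)
  also have "\<dots> \<le> (\<Sum>\<sigma>\<in>permutations_of_set UNIV. \<eta> * \<bar>ranking_loglik ms M \<theta> \<sigma>\<bar>)"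
    using assms(4) by (intro order.trans[OF sum_abs] sum_mono) (simp add: abs_mult mult_right_mono)
  finally show ?thesis
    by (simp add: sum_distrib_left)
qed

lemma compact_uniform_gap:
  fixes f :: "'a::topological_space \<Rightarrow> real"
  assumes "compact K" "continuous_on K f" "\<forall>x\<in>K. f x < a"
  obtains g where "g > 0" "\<forall>x\<in>K. f x + g \<le> a"
proof (cases "K = {}")
  case False
  then obtain x\<^sub>0 where "x\<^sub>0 \<in> K" "\<forall>x\<in>K. f x \<le> f x\<^sub>0"
    using continuous_attains_sup[OF assms(1) _ assms(2)] by blast
  with assms(3) show ?thesis
    by (intro that[of "a - f x\<^sub>0"]) auto
qed (use that[of 1] in simp)

lemma expected_loglik_gap:
  fixes \<theta>\<^sub>s :: "'a::finite \<Rightarrow> real"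
  assumes "ms \<noteq> []" "\<forall>m\<in>set ms. m \<ge> 1" "sum_list ms < CARD('a)" "M \<ge> Min (set ms)"
    and "\<theta>\<^sub>s \<in> Omega b" "\<epsilon> > 0"
  obtains g where "g > 0"
    "\<forall>\<theta>\<in>Omega b. (\<exists>i. \<epsilon> \<le> \<bar>\<theta> i - \<theta>\<^sub>s i\<bar>) \<longrightarrow> expected_loglik ms M \<theta>\<^sub>s \<theta> + g \<le> expected_loglik ms M \<theta>\<^sub>s \<theta>\<^sub>s"
proof (rule compact_uniform_gap[OF compact_Omega_far continuous_on_subset[OF continuous_on_expected_loglik subset_UNIV]])
  show "\<forall>\<theta>\<in>{\<theta> \<in> Omega b. \<exists>i. \<epsilon> \<le> \<bar>\<theta> i - \<theta>\<^sub>s i\<bar>}. expected_loglik ms M \<theta>\<^sub>s \<theta> < expected_loglik ms M \<theta>\<^sub>s \<theta>\<^sub>s"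
  proof
    fix \<theta> assume \<theta>: "\<theta> \<in> {\<theta> \<in> Omega b. \<exists>i. \<epsilon> \<le> \<bar>\<theta> i - \<theta>\<^sub>s i\<bar>}"
    then have "\<theta> \<noteq> \<theta>\<^sub>s" "(\<Sum>i\<in>UNIV. \<theta> i) = (\<Sum>i\<in>UNIV. \<theta>\<^sub>s i)"
      using assms(5,6) unfolding Omega_def by auto
    then show "expected_loglik ms M \<theta>\<^sub>s \<theta> < expected_loglik ms M \<theta>\<^sub>s \<theta>\<^sub>s"
      by (intro expected_loglik_less[OF assms(3)] exists_used_block_P_BT_ne[OF assms(1-4)])
  qed
qed (use that in blast)

lemma ranking_loglik_bounded:
  obtains C :: real where "C > 0"
    "\<forall>\<theta>\<in>Omega b. (\<Sum>\<sigma>\<in>permutations_of_set (UNIV :: 'a::finite set). \<bar>ranking_loglik ms M \<theta> \<sigma>\<bar>) \<le> C"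
proof -
  let ?G = "\<lambda>\<theta>. \<Sum>\<sigma>\<in>permutations_of_set (UNIV :: 'a set). \<bar>ranking_loglik ms M \<theta> \<sigma>\<bar>"
  have "compact (?G ` Omega b)"
    by (intro compact_continuous_image continuous_intros continuous_on_subset[OF continuous_on_ranking_loglik]
        compact_Omega) auto
  then obtain C where "C > 0" "\<forall>y\<in>?G ` Omega b. norm y \<le> C"
    using compact_imp_bounded bounded_pos by metis
  then show ?thesis
    by (intro that[of C]) auto
qed

text \<open>If all empirical ranking frequencies are within \<open>\<eta>\<close> of their probabilities, the normalised
  rank-breaking likelihood is uniformly within \<open>g/3\<close> of its expectation, so no maximiser can lie
  where the expectation is \<open>g\<close> below its maximum.\<close>

lemma far_estimator_imp_count_deviation:
  fixes \<theta>\<^sub>s :: "'a::finite \<Rightarrow> real"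
  assumes "ms \<noteq> []" "\<forall>m\<in>set ms. m \<ge> 1" "sum_list ms < CARD('a)" "M \<ge> Min (set ms)"
    and "\<theta>\<^sub>s \<in> Omega b" "\<epsilon> > 0"
  obtains \<eta> where "\<eta> > 0"
    "\<And>n data. n > 0 \<Longrightarrow> data \<in> samples n \<Longrightarrow> \<exists>\<theta>\<in>RB_argmax b ms M data. \<exists>i. \<bar>\<theta> i - \<theta>\<^sub>s i\<bar> > \<epsilon> \<Longrightarrow>
       \<exists>\<sigma>\<in>permutations_of_set UNIV. \<eta> < \<bar>real (count_list data \<sigma>) / real n - PL_prob \<theta>\<^sub>s \<sigma>\<bar>"
proof -
  obtain g where "g > 0" and gap:
    "\<forall>\<theta>\<in>Omega b. (\<exists>i. \<epsilon> \<le> \<bar>\<theta> i - \<theta>\<^sub>s i\<bar>) \<longrightarrow> expected_loglik ms M \<theta>\<^sub>s \<theta> + g \<le> expected_loglik ms M \<theta>\<^sub>s \<theta>\<^sub>s"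
    using expected_loglik_gap[OF assms] .
  obtain C where "C > 0" and C: "\<forall>\<theta>\<in>Omega b. (\<Sum>\<sigma>\<in>permutations_of_set (UNIV :: 'a set). \<bar>ranking_loglik ms M \<theta> \<sigma>\<bar>) \<le> C"
    using ranking_loglik_bounded .
  define \<eta> where "\<eta> = g / (3 * C)"
  have "\<eta> > 0" "\<eta> * C = g / 3"
    unfolding \<eta>_def using \<open>g > 0\<close> \<open>C > 0\<close> by simp_all
  moreover have "\<exists>\<sigma>\<in>permutations_of_set UNIV. \<eta> < \<bar>real (count_list data \<sigma>) / real n - PL_prob \<theta>\<^sub>s \<sigma>\<bar>"
    if "n > 0" "data \<in> samples n" and far: "\<exists>\<theta>\<in>RB_argmax b ms M data. \<exists>i. \<bar>\<theta> i - \<theta>\<^sub>s i\<bar> > \<epsilon>"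
    for n data
  proof (rule ccontr)
    assume "\<not> ?thesis"
    then have close: "\<bar>L_RB ms M data \<theta> / real n - expected_loglik ms M \<theta>\<^sub>s \<theta>\<bar> \<le> g / 3"
      if "\<theta> \<in> Omega b" for \<theta>
      using L_RB_approx_expected_loglik[OF \<open>data \<in> samples n\<close> \<open>n > 0\<close> assms(3), of \<theta>\<^sub>s \<eta> M \<theta>]
        C that \<open>\<eta> > 0\<close> \<open>\<eta> * C = g / 3\<close> mult_left_mono[of _ C \<eta>] by fastforce
    obtain \<theta> i where "\<theta> \<in> Omega b" "\<epsilon> < \<bar>\<theta> i - \<theta>\<^sub>s i\<bar>"
      and "L_RB ms M data \<theta>\<^sub>s \<le> L_RB ms M data \<theta>"
      using far assms(5) unfolding RB_argmax_def by blast
    then have "L_RB ms M data \<theta>\<^sub>s / real n \<le> L_RB ms M data \<theta> / real n"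
      "expected_loglik ms M \<theta>\<^sub>s \<theta> + g \<le> expected_loglik ms M \<theta>\<^sub>s \<theta>\<^sub>s"
      using gap by (auto intro: divide_right_mono less_imp_le)
    then show False
      using close[OF \<open>\<theta> \<in> Omega b\<close>] close[OF assms(5)] \<open>g > 0\<close> by linarith
  qed
  ultimately show ?thesis
    using that by blast
qed

theorem mainTheorem4:
  fixes \<theta>star :: "'a::finite \<Rightarrow> real" and b :: real and ms :: "nat list" and M :: nat
  assumes "length ms \<ge> 1"
    and "\<forall>m\<in>set ms. m \<ge> 1"
    and "sum_list ms < card (UNIV :: 'a set)"
    and "\<theta>star \<in> Omega b"
    and "M \<ge> Min (set ms)"
  shows "\<forall>\<epsilon>>0. (\<lambda>n. prob_n \<theta>star n
            (\<lambda>data. \<exists>\<theta>\<in>RB_argmax b ms M data. \<exists>i. \<bar>\<theta> i - \<theta>star i\<bar> > \<epsilon>))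
          \<longlonglongrightarrow> 0"
proof (intro allI impI)
  fix \<epsilon> :: real assume "\<epsilon> > 0"
  have "ms \<noteq> []"
    using assms(1) by auto
  obtain \<eta> where "\<eta> > 0" and deviation:
    "\<And>n data. n > 0 \<Longrightarrow> data \<in> samples n \<Longrightarrow> \<exists>\<theta>\<in>RB_argmax b ms M data. \<exists>i. \<bar>\<theta> i - \<theta>star i\<bar> > \<epsilon> \<Longrightarrow>
       \<exists>\<sigma>\<in>permutations_of_set UNIV. \<eta> < \<bar>real (count_list data \<sigma>) / real n - PL_prob \<theta>star \<sigma>\<bar>"
    using far_estimator_imp_count_deviation[OF \<open>ms \<noteq> []\<close> assms(2,3,5,4) \<open>\<epsilon> > 0\<close>] by blast
  show "(\<lambda>n. prob_n \<theta>star n (\<lambda>data. \<exists>\<theta>\<in>RB_argmax b ms M data. \<exists>i. \<bar>\<theta> i - \<theta>star i\<bar> > \<epsilon>)) \<longlonglongrightarrow> 0"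
  proof (rule tendsto_sandwich[OF _ _ tendsto_const prob_count_deviation_tendsto_0[OF \<open>\<eta> > 0\<close>]])
    show "\<forall>\<^sub>F n in sequentially. prob_n \<theta>star n (\<lambda>data. \<exists>\<theta>\<in>RB_argmax b ms M data. \<exists>i. \<bar>\<theta> i - \<theta>star i\<bar> > \<epsilon>)
        \<le> prob_n \<theta>star n (\<lambda>data. \<exists>\<sigma>\<in>permutations_of_set UNIV. \<eta> < \<bar>real (count_list data \<sigma>) / real n - PL_prob \<theta>star \<sigma>\<bar>)"
      using deviation by (intro eventually_sequentiallyI[of 1] prob_n_mono) auto
  qed (simp add: prob_n_nonneg)
qed

end
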